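(* Let $f_0,f_1,\dots,f_m$ be as in the context. Then (a) $f_i(0)-\inf_zf_i(z)\le 3000\pi^2\bar d\epsilon^2/(mL_f)$ for $i=1,\dots,m$, and $f_0(0)-\inf_xf_0(x)\le3000\pi^2\bar d\epsilon^2/L_f$; (b) $\nabla f_i$ is $L_f$-Lipschitz continuous for $i=0,1,\dots,m$; (c) $f_i$ is $\frac{50\pi\epsilon\sqrt{\bar d}}{\sqrt m}$-Lipschitz continuous for $i=1,\dots,m$, and $f_0$ is $50\pi\epsilon\sqrt{m\bar d}$-Lipschitz continuous.
   Context: Fix $\epsilon\in(0,1)$, $L_f>0$, integers $m_1\ge2$, $m_2\ge1$ with $m_1m_2$ even, $m=3m_1m_2$, an odd integer $\bar d\ge5$, $d=m\bar d$; $[z]_j$ is the $j$-th coordinate. $\Psi(u)=0$ ($u\le0$), $\Psi(u)=1-e^{-u^2}$ ($u>0$); $\Phi(v)=4\arctan v+2\pi$. For $z\in\mathbb R^{\bar d}$: $\varphi(z,1)=-\Psi(1)\Phi([z]_1)$, $\varphi(z,j)=\Psi(-[z]_{j-1})\Phi(-[z]_j)-\Psi([z]_{j-1})\Phi([z]_j)$ ($2\le j\le\bar d$); $h_i(z)=\varphi(z,1)+3\sum_{j=1}^{\lfloor\bar d/2\rfloor}\varphi(z,2j)$ for $1\le i\le m/3$, $h_i(z)=\varphi(z,1)$ for $m/3+1\le i\le 2m/3$, $h_i(z)=\varphi(z,1)+3\sum_{j=1}^{\lfloor\bar d/2\rfloor}\varphi(z,2j+1)$ for $2m/3+1\le i\le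 m$. $f_i(z)=\frac{300\pi\epsilon^2}{mL_f}h_i(\frac{\sqrt mL_fz}{150\pi\epsilon})$ for $z\in\mathbb R^{\bar d}$, and $f_0(x)=\sum_{i=1}^mf_i(x_i)$ for $x=(x_1^\top,\dots,x_m^\top)^\top\in\mathbb R^d$, $x_i\in\mathbb R^{\bar d}$. *)

theory Defs
  imports "HOL-Analysis.Analysis"
begin

text \<open>R^dbar is modelled as real^'n with 'n a finite linearly ordered index type,
  CARD('n) = dbar; the j-th coordinate (1-based) is the component at the j-th
  smallest index. R^d = (R^dbar)^m is modelled as real^'n^'m, block i being the
  component at the i-th smallest element of 'm.\<close>

definition Psi :: "real \<Rightarrow> real" where
  "Psi u = (if u \<le> 0 then 0 else 1 - exp (- (u^2)))"

definition Phi :: "real \<Rightarrow> real" where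
  "Phi v = 4 * arctan v + 2 * pi"

definition idx :: "nat \<Rightarrow> 'n::{finite,linorder}" where
  "idx j = sorted_list_of_set (UNIV :: 'n set) ! (j - 1)"

definition pos :: "'n::{finite,linorder} \<Rightarrow> nat" where
  "pos k = card {l. l < k} + 1"

definition crd :: "real^'n::{finite,linorder} \<Rightarrow> nat \<Rightarrow> real" where
  "crd z j = z $ idx j"

definition phi :: "real^'n::{finite,linorder} \<Rightarrow> nat \<Rightarrow> real" where
  "phi z j = (if j = 1 then - Psi 1 * Phi (crd z 1)
     else Psi (- crd z (j - 1)) * Phi (- crd z j) - Psi (crd z (j - 1)) * Phi (crd z j))"

definition hfun :: "nat \<Rightarrow> nat \<Rightarrow> real^'n::{finite,linorder} \<Rightarrow> real" where
  "hfun m i z =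
     (if i \<le> m div 3 then phi z 1 + 3 * (\<Sum>j=1..CARD('n) div 2. phi z (2*j))
      else if i \<le> 2 * m div 3 then phi z 1
      else phi z 1 + 3 * (\<Sum>j=1..CARD('n) div 2. phi z (2*j+1)))"

definition fi :: "real \<Rightarrow> real \<Rightarrow> nat \<Rightarrow> nat \<Rightarrow> real^'n::{finite,linorder} \<Rightarrow> real" where
  "fi eps Lf m i z = 300 * pi * eps^2 / (real m * Lf)
      * hfun m i ((sqrt (real m) * Lf / (150 * pi * eps)) *\<^sub>R z)"

definition f0 :: "real \<Rightarrow> real \<Rightarrow> real^'n::{finite,linorder}^'m::{finite,linorder} \<Rightarrow> real" where
  "f0 eps Lf x = (\<Sum>k\<in>UNIV. fi eps Lf CARD('m) (pos k) (x $ k))"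

end

(*
  Each h_i is -Psi(1) Phi(z_1) plus three times a sum of links
  Psi(-a) Phi(-b) - Psi(a) Phi(b) over pairwise disjoint pairs of coordinates (a, b).
  Psi, Phi and their derivatives are bounded and Lipschitz, and Phi(-b) + Phi(b) = 4 pi,
  which gives explicit constants for a single link. As the pairs are disjoint, the gradient
  contributions of different links are orthogonal, so the gradient of h_i is 75 pi-Lipschitz,
  while h_i itself is (4 + 12 pi) sqrt(dbar)-Lipschitz and h_i(0) - h_i(z) is at most
  2 pi + 12 pi (dbar div 2).
*)

theory Submission
  imports Defs
begin

lemma abs_diff_le_of_deriv_bound:
  fixes f f' :: "real \<Rightarrow> real"
  assumes "\<And>x. (f has_real_derivative f' x) (at x)" and "\<And>x. \<bar>f' x\<bar> \<le> B"
  shows "\<bar>f u - f v\<bar> \<le> B * \<bar>u - v\<bar>"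
  using field_differentiable_bound[OF convex_UNIV, of f f' B u v] assms by simp

lemma one_plus_sq_le_exp_sq: "1 + u^2 \<le> exp (u^2)" for u :: real
  using exp_ge_add_one_self[of "u^2"] by simp

lemma two_abs_le_one_plus_sq: "2 * \<bar>x\<bar> \<le> 1 + x^2" for x :: real
  using sum_squares_bound[of "\<bar>x\<bar>" 1] by simp

lemma sq_add_le_Cauchy_Schwarz: "(\<alpha> * x + \<beta> * y)^2 \<le> (\<alpha>^2 + \<beta>^2) * (x^2 + y^2)" for \<alpha> \<beta> x y :: real
proof -
  have "(\<alpha>^2 + \<beta>^2) * (x^2 + y^2) - (\<alpha> * x + \<beta> * y)^2 = (\<alpha> * y - \<beta> * x)^2"
    by (simp add: power2_eq_square algebra_simps)
  then show ?thesis
    using zero_le_power2[of "\<alpha> * y - \<beta> * x"] by linarith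
qed

lemma abs_add_mult_le_weighted:
  fixes s t p q e :: real
  assumes "\<bar>s\<bar> \<le> e" "\<bar>t\<bar> \<le> e" "0 \<le> p" "0 \<le> q"
  shows "\<bar>s * p + t * q\<bar> \<le> e * (p + q)"
proof -
  have "\<bar>s * p + t * q\<bar> \<le> \<bar>s\<bar> * p + \<bar>t\<bar> * q"
    using abs_triangle_ineq[of "s * p" "t * q"] assms(3,4) by (simp add: abs_mult)
  also have "\<dots> \<le> e * p + e * q"
    using assms by (intro add_mono mult_right_mono) auto
  finally show ?thesis by (simp add: algebra_simps)
qed

lemma abs_add_mult_le_double:
  fixes s t p q C e :: real
  assumes "\<bar>s\<bar> \<le> C" "\<bar>t\<bar> \<le> C" "\<bar>p\<bar> \<le> e" "\<bar>q\<bar> \<le> e"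
  shows "\<bar>s * p + t * q\<bar> \<le> 2 * C * e"
proof -
  have "0 \<le> C" using assms(1) abs_ge_zero[of s] by linarith
  have "\<bar>s * p + t * q\<bar> \<le> \<bar>s\<bar> * \<bar>p\<bar> + \<bar>t\<bar> * \<bar>q\<bar>"
    by (metis abs_mult abs_triangle_ineq)
  also have "\<dots> \<le> C * e + C * e"
    using assms \<open>0 \<le> C\<close> by (intro add_mono mult_mono) auto
  finally show ?thesis by simp
qed

lemma diff_INF_le:
  fixes f :: "'a \<Rightarrow> real"
  assumes "\<And>z. f a - f z \<le> B"
  shows "f a - (INF z. f z) \<le> B"
proof -
  have "f a - B \<le> (INF z. f z)"
    by (rule cINF_greatest) (use assms in \<open>auto simp: algebra_simps\<close>)
  then show ?thesis by linarith
qed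

section \<open>The building blocks Psi and Phi\<close>

definition dPsi :: "real \<Rightarrow> real" where
  "dPsi u = 2 * max u 0 * exp (- (u^2))"

definition dPhi :: "real \<Rightarrow> real" where
  "dPhi v = 4 / (1 + v^2)"

lemma Psi_bounds: "0 \<le> Psi u" "Psi u \<le> 1"
  unfolding Psi_def by auto

lemma dPsi_bounds: "0 \<le> dPsi u" "dPsi u \<le> 1"
proof -
  have "2 * max u 0 \<le> 1 + u^2"
    using two_abs_le_one_plus_sq[of u] by (auto simp: max_def split: if_splits)
  then have "2 * max u 0 \<le> exp (u^2)"
    using one_plus_sq_le_exp_sq[of u] by linarith
  then show "dPsi u \<le> 1" by (simp add: dPsi_def exp_minus field_simps)
qed (simp add: dPsi_def)

lemma Phi_bounds: "0 < Phi v" "Phi v < 4 * pi"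
  using arctan_bounded[of v] unfolding Phi_def by auto

lemma Phi_minus_add: "Phi (- v) + Phi v = 4 * pi"
  unfolding Phi_def by (simp add: arctan_minus)

lemma dPhi_bounds: "0 < dPhi v" "dPhi v \<le> 4"
  unfolding dPhi_def by (auto simp: field_simps add_pos_nonneg)

lemma abs_max_0_diff_le: "\<bar>max u 0 - max v 0\<bar> \<le> \<bar>u - v\<bar>" for u v :: real
  by (simp add: max_def abs_if)

lemma abs_Psi_diff_le: "\<bar>Psi u - Psi v\<bar> \<le> \<bar>u - v\<bar>"
proof -
  define F :: "real \<Rightarrow> real" where "F u = 1 - exp (- (u^2))" for u
  have "Psi w = F (max w 0)" for w
    by (simp add: Psi_def F_def max_def)
  then have "\<bar>Psi u - Psi v\<bar> = \<bar>F (max u 0) - F (max v 0)\<bar>"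
    by simp
  also have "\<dots> \<le> 1 * \<bar>max u 0 - max v 0\<bar>"
  proof (rule abs_diff_le_of_deriv_bound)
    show "(F has_real_derivative 2 * x * exp (- (x^2))) (at x)" for x
      unfolding F_def by (auto intro!: derivative_eq_intros)
    show "\<bar>2 * x * exp (- (x^2))\<bar> \<le> 1" for x :: real
      using dPsi_bounds[of "\<bar>x\<bar>"] by (simp add: dPsi_def abs_mult)
  qed
  also have "\<dots> \<le> \<bar>u - v\<bar>"
    using abs_max_0_diff_le[of u v] by simp
  finally show ?thesis .
qed

lemma abs_dPsi_diff_le: "\<bar>dPsi u - dPsi v\<bar> \<le> 4 * \<bar>u - v\<bar>"
proof -
  define g :: "real \<Rightarrow> real" where "g u = 2 * u * exp (- (u^2))" for u
  have "dPsi w = g (max w 0)" for w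
    by (simp add: dPsi_def g_def max_def)
  then have "\<bar>dPsi u - dPsi v\<bar> = \<bar>g (max u 0) - g (max v 0)\<bar>"
    by simp
  also have "\<dots> \<le> 4 * \<bar>max u 0 - max v 0\<bar>"
  proof (rule abs_diff_le_of_deriv_bound)
    show "(g has_real_derivative (2 - 4 * x^2) * exp (- (x^2))) (at x)" for x
      unfolding g_def by (auto intro!: derivative_eq_intros simp: power2_eq_square algebra_simps)
    show "\<bar>(2 - 4 * x^2) * exp (- (x^2))\<bar> \<le> 4" for x :: real
    proof -
      have "\<bar>2 - 4 * x^2\<bar> \<le> 4 * (1 + x^2)" by (simp add: abs_le_iff)
      also have "\<dots> \<le> 4 * exp (x^2)" using mult_left_mono[OF one_plus_sq_le_exp_sq[of x], of 4] by simp
      finally show ?thesis by (simp add: abs_mult exp_minus field_simps)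
    qed
  qed
  also have "\<dots> \<le> 4 * \<bar>u - v\<bar>"
    using abs_max_0_diff_le[of u v] by simp
  finally show ?thesis .
qed

lemma DERIV_Phi: "(Phi has_real_derivative dPhi v) (at v)"
  unfolding Phi_def dPhi_def by (auto intro!: derivative_eq_intros simp: field_simps)

lemma abs_Phi_diff_le: "\<bar>Phi u - Phi v\<bar> \<le> 4 * \<bar>u - v\<bar>"
  by (rule abs_diff_le_of_deriv_bound[OF DERIV_Phi]) (use dPhi_bounds in \<open>simp add: less_imp_le\<close>)

lemma abs_dPhi_diff_le: "\<bar>dPhi u - dPhi v\<bar> \<le> 4 * \<bar>u - v\<bar>"
proof (rule abs_diff_le_of_deriv_bound)
  fix x :: real
  have pos: "0 < 1 + x^2" by (simp add: add_pos_nonneg)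
  show "(dPhi has_real_derivative - 8 * x / (1 + x^2)^2) (at x)"
    unfolding dPhi_def using pos
    by (auto intro!: derivative_eq_intros simp: field_simps power2_eq_square)
  have "2 * \<bar>x\<bar> \<le> 1 + x^2" by (rule two_abs_le_one_plus_sq)
  also have "\<dots> \<le> (1 + x^2)^2" using pos by (simp add: power2_eq_square)
  finally show "\<bar>- 8 * x / (1 + x^2)^2\<bar> \<le> 4"
    using pos by (simp add: abs_mult abs_divide pos_divide_le_eq)
qed

lemma DERIV_Psi: "(Psi has_real_derivative dPsi u) (at u)"
proof (cases u "0::real" rule: linorder_cases)
  case less
  have "((\<lambda>_. 0) has_real_derivative dPsi u) (at u)"
    using less by (simp add: dPsi_def)
  then show ?thesis
    by (rule has_field_derivative_transform_within_open[where S = "{..<0}"])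
      (use less in \<open>auto simp: Psi_def\<close>)
next
  case greater
  have "((\<lambda>u. 1 - exp (- (u^2))) has_real_derivative dPsi u) (at u)"
    using greater by (auto intro!: derivative_eq_intros simp: dPsi_def)
  then show ?thesis
    by (rule has_field_derivative_transform_within_open[where S = "{0<..}"])
      (use greater in \<open>auto simp: Psi_def\<close>)
next
  case equal
  text \<open>\<open>0 \<le> Psi y \<le> y\<^sup>2\<close> squeezes the difference quotient at \<open>0\<close>.\<close>
  have quotient: "\<bar>(Psi y - Psi 0) / (y - 0)\<bar> \<le> \<bar>y\<bar>" for y
  proof -
    have "\<bar>Psi y\<bar> \<le> \<bar>y\<bar> * \<bar>y\<bar>"
      using exp_ge_add_one_self[of "- (y^2)"] by (auto simp: Psi_def power2_eq_square)
    then show ?thesis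
      by (cases "y = 0") (simp_all add: abs_divide pos_divide_le_eq Psi_def[of 0])
  qed
  have "((\<lambda>y. (Psi y - Psi 0) / (y - 0)) \<longlongrightarrow> 0) (at 0)"
    by (rule Lim_null_comparison[where g = abs, OF always_eventually])
      (use quotient in \<open>simp_all add: tendsto_rabs_zero_iff\<close>)
  then show ?thesis
    using equal by (simp add: has_field_derivative_iff dPsi_def)
qed

lemmas has_derivative_Psi [derivative_intros] = DERIV_Psi [THEN DERIV_compose_FDERIV]
lemmas has_derivative_Phi [derivative_intros] = DERIV_Phi [THEN DERIV_compose_FDERIV]
lemmas has_derivative_vec_nth [derivative_intros] =
  bounded_linear.has_derivative [OF bounded_linear_vec_nth]

section \<open>Links over disjoint pairs of coordinates\<close>

definition link :: "real \<Rightarrow> real \<Rightarrow> real" where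
  "link a b = Psi (- a) * Phi (- b) - Psi a * Phi b"

definition link_da :: "real \<Rightarrow> real \<Rightarrow> real" where
  "link_da a b = - dPsi (- a) * Phi (- b) - dPsi a * Phi b"

definition link_db :: "real \<Rightarrow> real \<Rightarrow> real" where
  "link_db a b = - Psi (- a) * dPhi (- b) - Psi a * dPhi b"

lemma phi_eq_link: "j \<noteq> 1 \<Longrightarrow> phi z j = link (z $ idx (j - 1)) (z $ idx j)"
  by (simp add: phi_def link_def crd_def)

lemma phi_1: "phi z (Suc 0) = - Psi 1 * Phi (z $ idx 1)"
  by (simp add: phi_def crd_def)

text \<open>In the \<open>a\<close>-direction the weights \<open>Phi (-b)\<close> and \<open>Phi b\<close> are summed exactly via
  \<open>Phi (-b) + Phi b = 4 pi\<close>; the cruder bound \<open>2 \<cdot> 4 pi\<close> would spoil the constants.\<close>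

lemma abs_link_diff_le: "\<bar>link a b - link a' b'\<bar> \<le> 4 * pi * (\<bar>a - a'\<bar> + \<bar>b - b'\<bar>)"
proof -
  have Psi: "\<bar>Psi (- a) - Psi (- a')\<bar> \<le> \<bar>a - a'\<bar>" "\<bar>Psi a' - Psi a\<bar> \<le> \<bar>a - a'\<bar>"
    using abs_Psi_diff_le[of "- a" "- a'"] abs_Psi_diff_le[of a' a] by (simp_all add: abs_minus_commute)
  have Phi: "\<bar>Phi (- b) - Phi (- b')\<bar> \<le> 4 * \<bar>b - b'\<bar>" "\<bar>Phi b' - Phi b\<bar> \<le> 4 * \<bar>b - b'\<bar>"
    using abs_Phi_diff_le[of "- b" "- b'"] abs_Phi_diff_le[of b' b] by (simp_all add: abs_minus_commute)
  have "\<bar>link a b - link a' b\<bar> = \<bar>(Psi (- a) - Psi (- a')) * Phi (- b) + (Psi a' - Psi a) * Phi b\<bar>"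
    by (rule arg_cong[where f = abs]) (simp add: link_def algebra_simps)
  also have "\<dots> \<le> \<bar>a - a'\<bar> * (Phi (- b) + Phi b)"
    by (rule abs_add_mult_le_weighted) (use Psi Phi_bounds in \<open>auto intro: less_imp_le\<close>)
  finally have A: "\<bar>link a b - link a' b\<bar> \<le> 4 * pi * \<bar>a - a'\<bar>"
    by (simp add: Phi_minus_add mult_ac)
  have "\<bar>link a' b - link a' b'\<bar> = \<bar>Psi (- a') * (Phi (- b) - Phi (- b')) + Psi a' * (Phi b' - Phi b)\<bar>"
    by (rule arg_cong[where f = abs]) (simp add: link_def algebra_simps)
  also have "\<dots> \<le> 2 * 1 * (4 * \<bar>b - b'\<bar>)"
    by (rule abs_add_mult_le_double) (use Phi Psi_bounds in auto)
  also have "\<dots> = 8 * \<bar>b - b'\<bar>"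
    by simp
  also have "\<dots> \<le> 4 * pi * \<bar>b - b'\<bar>"
    using pi_gt3 by (intro mult_right_mono) auto
  finally show ?thesis
    using A by (simp add: algebra_simps)
qed

lemma abs_link_da_diff_le: "\<bar>link_da a b - link_da a' b'\<bar> \<le> 16 * pi * \<bar>a - a'\<bar> + 8 * \<bar>b - b'\<bar>"
proof -
  have dPsi: "\<bar>dPsi (- a') - dPsi (- a)\<bar> \<le> 4 * \<bar>a - a'\<bar>" "\<bar>dPsi a' - dPsi a\<bar> \<le> 4 * \<bar>a - a'\<bar>"
    using abs_dPsi_diff_le[of "- a'" "- a"] abs_dPsi_diff_le[of a' a] by (simp_all add: abs_minus_commute)
  have Phi: "\<bar>Phi (- b') - Phi (- b)\<bar> \<le> 4 * \<bar>b - b'\<bar>" "\<bar>Phi b' - Phi b\<bar> \<le> 4 * \<bar>b - b'\<bar>"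
    using abs_Phi_diff_le[of "- b'" "- b"] abs_Phi_diff_le[of b' b] by (simp_all add: abs_minus_commute)
  have "\<bar>link_da a b - link_da a' b\<bar> = \<bar>(dPsi (- a') - dPsi (- a)) * Phi (- b) + (dPsi a' - dPsi a) * Phi b\<bar>"
    by (rule arg_cong[where f = abs]) (simp add: link_da_def algebra_simps)
  also have "\<dots> \<le> 4 * \<bar>a - a'\<bar> * (Phi (- b) + Phi b)"
    by (rule abs_add_mult_le_weighted) (use dPsi Phi_bounds in \<open>auto intro: less_imp_le\<close>)
  finally have A: "\<bar>link_da a b - link_da a' b\<bar> \<le> 16 * pi * \<bar>a - a'\<bar>"
    by (simp add: Phi_minus_add mult_ac)
  have "\<bar>link_da a' b - link_da a' b'\<bar> = \<bar>dPsi (- a') * (Phi (- b') - Phi (- b)) + dPsi a' * (Phi b' - Phi b)\<bar>"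
    by (rule arg_cong[where f = abs]) (simp add: link_da_def algebra_simps)
  also have "\<dots> \<le> 2 * 1 * (4 * \<bar>b - b'\<bar>)"
    by (rule abs_add_mult_le_double) (use Phi dPsi_bounds in auto)
  finally show ?thesis
    using A by simp
qed

lemma abs_link_db_diff_le: "\<bar>link_db a b - link_db a' b'\<bar> \<le> 8 * \<bar>a - a'\<bar> + 8 * \<bar>b - b'\<bar>"
proof -
  have Psi: "\<bar>Psi (- a') - Psi (- a)\<bar> \<le> \<bar>a - a'\<bar>" "\<bar>Psi a' - Psi a\<bar> \<le> \<bar>a - a'\<bar>"
    using abs_Psi_diff_le[of "- a'" "- a"] abs_Psi_diff_le[of a' a] by (simp_all add: abs_minus_commute)
  have dPhi: "\<bar>dPhi (- b') - dPhi (- b)\<bar> \<le> 4 * \<bar>b - b'\<bar>" "\<bar>dPhi b' - dPhi b\<bar> \<le> 4 * \<bar>b - b'\<bar>"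
    using abs_dPhi_diff_le[of "- b'" "- b"] abs_dPhi_diff_le[of b' b] by (simp_all add: abs_minus_commute)
  have "\<bar>link_db a b - link_db a' b\<bar> = \<bar>dPhi (- b) * (Psi (- a') - Psi (- a)) + dPhi b * (Psi a' - Psi a)\<bar>"
    by (rule arg_cong[where f = abs]) (simp add: link_db_def algebra_simps)
  also have "\<dots> \<le> 2 * 4 * \<bar>a - a'\<bar>"
    by (rule abs_add_mult_le_double) (use Psi dPhi_bounds in \<open>auto simp: less_imp_le\<close>)
  finally have A: "\<bar>link_db a b - link_db a' b\<bar> \<le> 8 * \<bar>a - a'\<bar>"
    by simp
  have "\<bar>link_db a' b - link_db a' b'\<bar> = \<bar>Psi (- a') * (dPhi (- b') - dPhi (- b)) + Psi a' * (dPhi b' - dPhi b)\<bar>"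
    by (rule arg_cong[where f = abs]) (simp add: link_db_def algebra_simps)
  also have "\<dots> \<le> 2 * 1 * (4 * \<bar>b - b'\<bar>)"
    by (rule abs_add_mult_le_double) (use dPhi Psi_bounds in auto)
  finally show ?thesis
    using A by simp
qed

lemma link_grad_diff_sq_le:
  "(link_da a b - link_da a' b')^2 + (link_db a b - link_db a' b')^2
     \<le> (23 * pi)^2 * ((a - a')^2 + (b - b')^2)"
proof -
  let ?x = "\<bar>a - a'\<bar>" and ?y = "\<bar>b - b'\<bar>"
  have "(link_da a b - link_da a' b')^2 \<le> (16 * pi * ?x + 8 * ?y)^2"
    using abs_link_da_diff_le[of a b a' b'] by (simp add: abs_le_square_iff[symmetric])
  also have "\<dots> \<le> ((16 * pi)^2 + 8^2) * (?x^2 + ?y^2)"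
    by (rule sq_add_le_Cauchy_Schwarz)
  finally have A: "(link_da a b - link_da a' b')^2 \<le> (256 * pi^2 + 64) * ((a - a')^2 + (b - b')^2)"
    by (simp add: power_mult_distrib)
  have "(link_db a b - link_db a' b')^2 \<le> (8 * ?x + 8 * ?y)^2"
    using abs_link_db_diff_le[of a b a' b'] by (simp add: abs_le_square_iff[symmetric])
  also have "\<dots> \<le> (8^2 + 8^2) * (?x^2 + ?y^2)"
    by (rule sq_add_le_Cauchy_Schwarz)
  finally have B: "(link_db a b - link_db a' b')^2 \<le> 128 * ((a - a')^2 + (b - b')^2)"
    by simp
  have "256 * pi^2 + 64 + 128 \<le> (23 * pi)^2"
  proof -
    have "3^2 \<le> pi^2" using pi_gt3 by (intro power_mono) auto
    then show ?thesis by (simp add: power_mult_distrib)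
  qed
  then have "(256 * pi^2 + 64 + 128) * ((a - a')^2 + (b - b')^2) \<le> (23 * pi)^2 * ((a - a')^2 + (b - b')^2)"
    by (intro mult_right_mono) auto
  with A B show ?thesis
    by (simp add: algebra_simps)
qed

definition disjoint_pairs :: "('t \<Rightarrow> 'n) \<Rightarrow> ('t \<Rightarrow> 'n) \<Rightarrow> 't set \<Rightarrow> bool" where
  "disjoint_pairs a b S \<longleftrightarrow> finite S \<and> inj_on a S \<and> inj_on b S \<and> a ` S \<inter> b ` S = {}"

lemma sum_disjoint_pairs_le:
  fixes f :: "'n::finite \<Rightarrow> real"
  assumes "disjoint_pairs a b S" and "\<And>k. 0 \<le> f k"
  shows "(\<Sum>t\<in>S. f (a t) + f (b t)) \<le> (\<Sum>k\<in>UNIV. f k)"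
proof -
  have S: "finite S" "inj_on a S" "inj_on b S" "a ` S \<inter> b ` S = {}"
    using assms(1) by (auto simp: disjoint_pairs_def)
  have "(\<Sum>t\<in>S. f (a t) + f (b t)) = (\<Sum>k\<in>a ` S. f k) + (\<Sum>k\<in>b ` S. f k)"
    by (simp add: sum.distrib sum.reindex S)
  also have "\<dots> = (\<Sum>k\<in>a ` S \<union> b ` S. f k)"
    by (rule sum.union_disjoint[symmetric]) (use S in auto)
  also have "\<dots> \<le> (\<Sum>k\<in>UNIV. f k)"
    by (rule sum_mono2) (use assms(2) in auto)
  finally show ?thesis .
qed

lemma norm_vec_sq: "(norm x)^2 = (\<Sum>i\<in>UNIV. (x $ i)^2)" for x :: "real^'n"
  by (simp add: norm_vec_def L2_set_def sum_nonneg)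

lemma sum_abs_vec_nth_le: "(\<Sum>k\<in>UNIV. \<bar>x $ k\<bar>) \<le> sqrt (real CARD('n)) * norm x" for x :: "real^'n"
proof -
  have "norm x = L2_set (\<lambda>k. x $ k) UNIV"
    by (simp add: norm_vec_def L2_set_def)
  then show ?thesis
    using L2_set_mult_ineq[of "\<lambda>k. x $ k" "\<lambda>_. 1" UNIV] by (simp add: L2_set_constant mult.commute)
qed

lemma lipschitz_on_vec_nth_comp:
  fixes g :: "real \<Rightarrow> real"
  assumes "\<And>u v. \<bar>g u - g v\<bar> \<le> K * \<bar>u - v\<bar>" and "0 \<le> K"
  shows "K-lipschitz_on UNIV (\<lambda>z::real^'n. g (z $ c))"
proof (rule lipschitz_onI)
  fix z w :: "real^'n"
  have "\<bar>g (z $ c) - g (w $ c)\<bar> \<le> K * \<bar>z $ c - w $ c\<bar>" by (rule assms(1))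
  also have "\<dots> \<le> K * dist z w"
    using dist_vec_nth_le[of z c w] assms(2) by (intro mult_left_mono) (auto simp: dist_real_def)
  finally show "dist (g (z $ c)) (g (w $ c)) \<le> K * dist z w"
    by (simp add: dist_real_def)
qed fact

definition link_sum :: "('t \<Rightarrow> 'n) \<Rightarrow> ('t \<Rightarrow> 'n) \<Rightarrow> 't set \<Rightarrow> real^'n::finite \<Rightarrow> real" where
  "link_sum a b S z = (\<Sum>t\<in>S. link (z $ a t) (z $ b t))"

definition link_sum_grad :: "('t \<Rightarrow> 'n) \<Rightarrow> ('t \<Rightarrow> 'n) \<Rightarrow> 't set \<Rightarrow> real^'n::finite \<Rightarrow> real^'n" where
  "link_sum_grad a b S z =
     (\<Sum>t\<in>S. link_da (z $ a t) (z $ b t) *\<^sub>R axis (a t) 1 + link_db (z $ a t) (z $ b t) *\<^sub>R axis (b t) 1)"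

lemma has_derivative_link_sum:
  "(link_sum a b S has_derivative (\<lambda>h. link_sum_grad a b S z \<bullet> h)) (at z)"
proof -
  have "((\<lambda>z. \<Sum>t\<in>S. link (z $ a t) (z $ b t)) has_derivative
      (\<lambda>h. \<Sum>t\<in>S. link_da (z $ a t) (z $ b t) * h $ a t + link_db (z $ a t) (z $ b t) * h $ b t)) (at z)"
    unfolding link_def
    by (auto intro!: derivative_eq_intros simp: fun_eq_iff link_da_def link_db_def sum_distrib_left algebra_simps)
  then show ?thesis
    unfolding link_sum_def[abs_def]
    by (rule has_derivative_eq_rhs) (simp add: fun_eq_iff link_sum_grad_def inner_sum_left inner_add_left inner_axis')
qed

text \<open>Disjoint pairs contribute orthogonal vectors to the gradient, so the squared
  pairwise bounds of \<open>link_grad_diff_sq_le\<close> add up.\<close>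

lemma lipschitz_link_sum_grad:
  fixes a b :: "'t \<Rightarrow> 'n::finite"
  assumes "disjoint_pairs a b S"
  shows "(23 * pi)-lipschitz_on UNIV (link_sum_grad a b S)"
proof (rule lipschitz_onI)
  fix z w :: "real^'n"
  have S: "finite S" "inj_on a S" "inj_on b S" "\<And>s t. s \<in> S \<Longrightarrow> t \<in> S \<Longrightarrow> a s \<noteq> b t"
    using assms by (auto simp: disjoint_pairs_def)
  define da where "da t = link_da (z $ a t) (z $ b t) - link_da (w $ a t) (w $ b t)" for t
  define db where "db t = link_db (z $ a t) (z $ b t) - link_db (w $ a t) (w $ b t)" for t
  define u where "u t = da t *\<^sub>R axis (a t) (1::real) + db t *\<^sub>R axis (b t) 1" for t
  have diff: "link_sum_grad a b S z - link_sum_grad a b S w = (\<Sum>t\<in>S. u t)"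
    unfolding link_sum_grad_def sum_subtractf[symmetric]
    by (rule sum.cong) (auto simp: u_def da_def db_def scaleR_diff_left algebra_simps)
  have "pairwise (\<lambda>s t. orthogonal (u s) (u t)) S"
    using S by (auto simp: pairwise_def orthogonal_def u_def inner_add_left inner_add_right
        inner_axis_axis inj_on_def dest: sym[of "b _"])
  then have "(norm (\<Sum>t\<in>S. u t))^2 = (\<Sum>t\<in>S. (norm (u t))^2)"
    by (rule norm_sum_Pythagorean[OF S(1)])
  also have "\<dots> = (\<Sum>t\<in>S. (da t)^2 + (db t)^2)"
    using S(4) unfolding power2_norm_eq_inner u_def
    by (intro sum.cong) (fastforce simp: inner_add_left inner_add_right inner_axis_axis power2_eq_square)+
  also have "\<dots> \<le> (\<Sum>t\<in>S. (23 * pi)^2 * (((z - w) $ a t)^2 + ((z - w) $ b t)^2))"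
    unfolding da_def db_def vector_minus_component by (rule sum_mono) (rule link_grad_diff_sq_le)
  also have "\<dots> \<le> (23 * pi)^2 * (\<Sum>k\<in>UNIV. ((z - w) $ k)^2)"
    unfolding sum_distrib_left[symmetric]
    by (rule mult_left_mono[OF sum_disjoint_pairs_le[OF assms]]) auto
  also have "\<dots> = (23 * pi * dist z w)^2"
    by (simp add: norm_vec_sq power_mult_distrib dist_norm)
  finally show "dist (link_sum_grad a b S z) (link_sum_grad a b S w) \<le> 23 * pi * dist z w"
    unfolding dist_norm[of "link_sum_grad a b S z"] diff
    by (rule power2_le_imp_le) simp
qed simp

lemma lipschitz_link_sum:
  fixes a b :: "'t \<Rightarrow> 'n::finite"
  assumes "disjoint_pairs a b S"
  shows "(4 * pi * sqrt (real CARD('n)))-lipschitz_on UNIV (link_sum a b S :: real^'n::finite \<Rightarrow> real)"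
proof (rule lipschitz_onI)
  fix z w :: "real^'n"
  have "\<bar>link_sum a b S z - link_sum a b S w\<bar>
      \<le> (\<Sum>t\<in>S. \<bar>link (z $ a t) (z $ b t) - link (w $ a t) (w $ b t)\<bar>)"
    unfolding link_sum_def sum_subtractf[symmetric] by (rule sum_abs)
  also have "\<dots> \<le> (\<Sum>t\<in>S. 4 * pi * (\<bar>(z - w) $ a t\<bar> + \<bar>(z - w) $ b t\<bar>))"
    unfolding vector_minus_component by (rule sum_mono) (rule abs_link_diff_le)
  also have "\<dots> \<le> 4 * pi * (\<Sum>k\<in>UNIV. \<bar>(z - w) $ k\<bar>)"
    unfolding sum_distrib_left[symmetric]
    by (rule mult_left_mono[OF sum_disjoint_pairs_le[OF assms]]) auto
  also have "\<dots> \<le> 4 * pi * (sqrt (real CARD('n)) * dist z w)"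
    using sum_abs_vec_nth_le[of "z - w"] by (simp add: dist_norm)
  finally show "dist (link_sum a b S z) (link_sum a b S w) \<le> 4 * pi * sqrt (real CARD('n)) * dist z w"
    by (simp add: dist_real_def mult.assoc)
qed simp

definition chain_fun :: "'n \<Rightarrow> ('t \<Rightarrow> 'n) \<Rightarrow> ('t \<Rightarrow> 'n) \<Rightarrow> 't set \<Rightarrow> real^'n::finite \<Rightarrow> real" where
  "chain_fun c a b S z = - Psi 1 * Phi (z $ c) + 3 * link_sum a b S z"

definition chain_grad :: "'n \<Rightarrow> ('t \<Rightarrow> 'n) \<Rightarrow> ('t \<Rightarrow> 'n) \<Rightarrow> 't set \<Rightarrow> real^'n::finite \<Rightarrow> real^'n" where
  "chain_grad c a b S z = (- Psi 1 * dPhi (z $ c)) *\<^sub>R axis c 1 + 3 *\<^sub>R link_sum_grad a b S z"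

lemma has_derivative_chain_fun:
  "(chain_fun c a b S has_derivative (\<lambda>h. chain_grad c a b S z \<bullet> h)) (at z)"
  unfolding chain_fun_def[abs_def]
  by (rule has_derivative_eq_rhs[OF has_derivative_add[OF _ has_derivative_mult_right[OF has_derivative_link_sum]]])
    (auto intro!: derivative_eq_intros simp: fun_eq_iff chain_grad_def inner_add_left inner_diff_left inner_axis' algebra_simps)

lemma lipschitz_chain_grad:
  fixes a b :: "'t \<Rightarrow> 'n::finite"
  assumes "disjoint_pairs a b S"
  shows "(75 * pi)-lipschitz_on UNIV (chain_grad c a b S)"
proof -
  have "4-lipschitz_on UNIV (\<lambda>z::real^'n. - Psi 1 * dPhi (z $ c))"
    using lipschitz_on_cmult_real_upper[OF lipschitz_on_vec_nth_comp[OF abs_dPhi_diff_le], of "- Psi 1" 1]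
    using Psi_bounds[of 1] by simp
  then have "4-lipschitz_on UNIV (\<lambda>z::real^'n. (- Psi 1 * dPhi (z $ c)) *\<^sub>R axis c (1::real))"
    by (simp add: lipschitz_on_def dist_norm scaleR_diff_left[symmetric])
  then have "(4 + 3 * (23 * pi))-lipschitz_on UNIV (chain_grad c a b S)"
    unfolding chain_grad_def[abs_def]
    by (intro lipschitz_on_add lipschitz_on_cmult_nonneg lipschitz_link_sum_grad assms) auto
  then show ?thesis
    by (rule lipschitz_on_mono) (use pi_gt3 in auto)
qed

lemma lipschitz_chain_fun:
  fixes a b :: "'t \<Rightarrow> 'n::finite"
  assumes "disjoint_pairs a b S"
  shows "((4 + 12 * pi) * sqrt (real CARD('n)))-lipschitz_on UNIV (chain_fun c a b S :: real^'n::finite \<Rightarrow> real)"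
proof -
  have "4-lipschitz_on UNIV (\<lambda>z::real^'n. - Psi 1 * Phi (z $ c))"
    using lipschitz_on_cmult_real_upper[OF lipschitz_on_vec_nth_comp[OF abs_Phi_diff_le], of "- Psi 1" 1]
    using Psi_bounds[of 1] by simp
  then have "(4 + 3 * (4 * pi * sqrt (real CARD('n))))-lipschitz_on UNIV (chain_fun c a b S :: real^'n \<Rightarrow> real)"
    unfolding chain_fun_def[abs_def]
    by (intro lipschitz_on_add lipschitz_on_cmult_real_nonneg lipschitz_link_sum assms) auto
  then show ?thesis
    by (rule lipschitz_on_mono) (auto simp: algebra_simps)
qed

lemma link_ge: "- 4 * pi \<le> link a b"
proof -
  have "Psi a * Phi b \<le> 1 * (4 * pi)"
    using Psi_bounds[of a] Phi_bounds[of b] by (intro mult_mono) auto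
  moreover have "0 \<le> Psi (- a) * Phi (- b)"
    using Psi_bounds(1) Phi_bounds(1)[of "- b"] by simp
  ultimately show ?thesis
    by (simp add: link_def)
qed

lemma chain_fun_gap:
  "chain_fun c a b S 0 - chain_fun c a b S z \<le> 2 * pi + 12 * pi * real (card S)"
proof -
  have "link 0 0 = 0" by (simp add: link_def Psi_def)
  then have at_0: "chain_fun c a b S 0 = - 2 * pi * Psi 1"
    by (simp add: chain_fun_def link_sum_def Phi_def)
  have "- 4 * pi * real (card S) \<le> link_sum a b S z"
    using sum_mono[of S "\<lambda>_. - 4 * pi" "\<lambda>t. link (z $ a t) (z $ b t)"] link_ge
    by (simp add: link_sum_def mult_ac)
  moreover have "Psi 1 * Phi (z $ c) \<le> 4 * pi * Psi 1"
    using Psi_bounds[of 1] Phi_bounds[of "z $ c"] mult_left_mono[of "Phi (z $ c)" "4 * pi" "Psi 1"]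
    by (simp add: mult_ac)
  moreover have "pi * Psi 1 \<le> pi"
    using Psi_bounds[of 1] by simp
  ultimately show ?thesis
    unfolding at_0 chain_fun_def[of c a b S z] by linarith
qed

section \<open>The functions f_i and f_0\<close>

lemma inj_on_idx: "inj_on (idx :: nat \<Rightarrow> 'n::{finite,linorder}) {1..CARD('n)}"
proof (rule inj_onI)
  fix i j assume ij: "i \<in> {1..CARD('n)}" "j \<in> {1..CARD('n)}" and eq: "(idx i :: 'n) = idx j"
  let ?L = "sorted_list_of_set (UNIV :: 'n set)"
  have "inj_on ((!) ?L) {..<CARD('n)}"
    by (rule inj_on_nth) auto
  then have "i - 1 = j - 1"
    using ij eq by (auto simp: idx_def inj_on_def)
  then show "i = j"
    using ij by auto
qed

lemma disjoint_pairs_consecutive: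
  assumes "r \<le> 1" and "2 * (CARD('n) div 2) + r \<le> CARD('n)"
  shows "disjoint_pairs (\<lambda>t. idx (2 * t + r - 1) :: 'n::{finite,linorder}) (\<lambda>t. idx (2 * t + r))
           {1..CARD('n) div 2}"
proof -
  let ?S = "{1..CARD('n) div 2}"
  have range: "2 * t + r - 1 \<in> {1..CARD('n)}" "2 * t + r \<in> {1..CARD('n)}" if "t \<in> ?S" for t
    using that assms by auto
  have idx_eq: "(idx i :: 'n) = idx j \<longleftrightarrow> i = j" if "i \<in> {1..CARD('n)}" "j \<in> {1..CARD('n)}" for i j
    using inj_on_idx[where 'n = 'n] that by (auto simp: inj_on_eq_iff)
  show ?thesis
    unfolding disjoint_pairs_def
  proof (intro conjI)
    show "inj_on (\<lambda>t. idx (2 * t + r - 1) :: 'n) ?S"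
      by (rule inj_onI) (use range idx_eq in \<open>fastforce\<close>)
    show "inj_on (\<lambda>t. idx (2 * t + r) :: 'n) ?S"
      by (rule inj_onI) (use range idx_eq in \<open>fastforce\<close>)
    show "(\<lambda>t. idx (2 * t + r - 1) :: 'n) ` ?S \<inter> (\<lambda>t. idx (2 * t + r)) ` ?S = {}"
    proof (rule ccontr)
      assume "\<not> ?thesis"
      then obtain s t where "s \<in> ?S" "t \<in> ?S" "(idx (2 * s + r - 1) :: 'n) = idx (2 * t + r)"
        by blast
      then have "2 * s + r - 1 = 2 * t + r"
        using range idx_eq by blast
      then show False
        using \<open>s \<in> ?S\<close> by presburger
    qed
  qed simp
qed

lemma hfun_eq_chain_fun:
  assumes "odd CARD('n::{finite,linorder})"
  obtains a b :: "nat \<Rightarrow> 'n::{finite,linorder}" and S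
  where "disjoint_pairs a b S" "card S \<le> CARD('n) div 2" "hfun m i = chain_fun (idx 1) a b S"
proof -
  let ?S = "{1..CARD('n) div 2}"
  have odd: "2 * (CARD('n) div 2) + 1 = CARD('n)"
    using assms by simp
  consider "i \<le> m div 3" | "\<not> i \<le> m div 3" "i \<le> 2 * m div 3" | "\<not> i \<le> m div 3" "\<not> i \<le> 2 * m div 3"
    by blast
  then show ?thesis
  proof cases
    case 1
    have "hfun m i = chain_fun (idx 1 :: 'n) (\<lambda>t. idx (2 * t + 0 - 1)) (\<lambda>t. idx (2 * t + 0)) ?S"
      using 1 by (simp add: fun_eq_iff hfun_def chain_fun_def link_sum_def phi_1 phi_eq_link)
    moreover have "disjoint_pairs (\<lambda>t. idx (2 * t + 0 - 1) :: 'n) (\<lambda>t. idx (2 * t + 0)) ?S"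
      by (rule disjoint_pairs_consecutive) auto
    ultimately show ?thesis
      using that by simp
  next
    case 2
    have "hfun m i = chain_fun (idx 1 :: 'n) (\<lambda>_. idx 1) (\<lambda>_. idx 1) {}"
      using 2 by (simp add: fun_eq_iff hfun_def chain_fun_def link_sum_def phi_1)
    then show ?thesis
      using that[of "\<lambda>_. idx 1" "\<lambda>_. idx 1" "{}"] by (simp add: disjoint_pairs_def)
  next
    case 3
    have "hfun m i = chain_fun (idx 1 :: 'n) (\<lambda>t. idx (2 * t + 1 - 1)) (\<lambda>t. idx (2 * t + 1)) ?S"
      using 3 by (simp add: fun_eq_iff hfun_def chain_fun_def link_sum_def phi_1 phi_eq_link)
    moreover have "disjoint_pairs (\<lambda>t. idx (2 * t + 1 - 1) :: 'n) (\<lambda>t. idx (2 * t + 1)) ?S"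
      by (rule disjoint_pairs_consecutive) (use odd in auto)
    ultimately show ?thesis
      using that by simp
  qed
qed

lemma has_derivative_rescale:
  fixes f :: "'a::real_inner \<Rightarrow> real"
  assumes "(f has_derivative (\<lambda>h. G (s *\<^sub>R z) \<bullet> h)) (at (s *\<^sub>R z))"
  shows "((\<lambda>z. c * f (s *\<^sub>R z)) has_derivative (\<lambda>h. ((c * s) *\<^sub>R G (s *\<^sub>R z)) \<bullet> h)) (at z)"
proof -
  have "((\<lambda>z. f (s *\<^sub>R z)) has_derivative (\<lambda>h. G (s *\<^sub>R z) \<bullet> (s *\<^sub>R h))) (at z)"
    by (rule has_derivative_compose[OF has_derivative_scaleR_right[OF has_derivative_ident] assms])
  then show ?thesis
    by (rule has_derivative_eq_rhs[OF has_derivative_mult_right]) (simp add: fun_eq_iff)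
qed

lemma lipschitz_on_rescale:
  fixes g :: "'a::real_normed_vector \<Rightarrow> 'b::real_normed_vector"
  assumes "L-lipschitz_on UNIV g" and "0 \<le> c"
  shows "(c * (L * \<bar>s\<bar>))-lipschitz_on UNIV (\<lambda>z. c *\<^sub>R g (s *\<^sub>R z))"
proof -
  have "(\<bar>s\<bar> * 1)-lipschitz_on UNIV (\<lambda>z::'a. s *\<^sub>R z)"
    by (rule lipschitz_on_cmult[OF lipschitz_on_id])
  then have "(L * (\<bar>s\<bar> * 1))-lipschitz_on UNIV (\<lambda>z. g (s *\<^sub>R z))"
    by (rule lipschitz_on_compose2) (rule lipschitz_on_subset[OF assms(1)], simp)
  then show ?thesis
    using lipschitz_on_cmult_nonneg[OF _ assms(2)] by simp
qed

lemma fi_scale_constants: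
  fixes eps Lf :: real and m :: nat
  assumes "0 < eps" "0 < Lf" "0 < m"
  defines "c \<equiv> 300 * pi * eps^2 / (real m * Lf)" and "s \<equiv> sqrt (real m) * Lf / (150 * pi * eps)"
  shows "0 < c" "0 < s" "c * s = 2 * eps / sqrt (real m)" "c * s * (75 * pi * s) = Lf"
proof -
  have sqrt_m: "0 < sqrt (real m)" "sqrt (real m) * sqrt (real m) = real m"
    using assms(3) by simp_all
  show "0 < c" "0 < s"
    unfolding c_def s_def using assms(1-3) by simp_all
  have "c * s = 2 * eps * (sqrt (real m) / real m)"
    unfolding c_def s_def using assms(1-3) by (simp add: field_simps power2_eq_square)
  also have "\<dots> = 2 * eps / sqrt (real m)"
    by (subst sqrt_divide_self_eq) (simp_all add: divide_inverse)
  finally show cs: "c * s = 2 * eps / sqrt (real m)" .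
  have "c * s * (75 * pi * s) = 2 * eps / sqrt (real m) * (75 * pi * (sqrt (real m) * Lf / (150 * pi * eps)))"
    unfolding cs by (simp only: s_def)
  also have "\<dots> = Lf"
    using assms(1-3) sqrt_m by (simp add: field_simps)
  finally show "c * s * (75 * pi * s) = Lf" .
qed

lemma fi_gradient:
  fixes eps Lf :: real and m i :: nat
  assumes "0 < eps" "0 < Lf" "0 < m" "odd CARD('n::{finite,linorder})"
  shows "\<exists>G :: real^'n::{finite,linorder} \<Rightarrow> real^'n::{finite,linorder}.
           (\<forall>z. (fi eps Lf m i has_derivative (\<lambda>h. G z \<bullet> h)) (at z)) \<and> Lf-lipschitz_on UNIV G"
proof -
  obtain a b :: "nat \<Rightarrow> 'n" and S where S: "disjoint_pairs a b S" and h: "hfun m i = chain_fun (idx 1) a b S"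
    using hfun_eq_chain_fun[OF assms(4)] by metis
  define c where "c = 300 * pi * eps^2 / (real m * Lf)"
  define s where "s = sqrt (real m) * Lf / (150 * pi * eps)"
  note K = fi_scale_constants[OF assms(1-3), folded c_def s_def]
  have fi: "fi eps Lf m i = (\<lambda>z. c * chain_fun (idx 1) a b S (s *\<^sub>R z))"
    by (simp add: fun_eq_iff fi_def c_def s_def h)
  show ?thesis
  proof (intro exI conjI allI)
    show "(fi eps Lf m i has_derivative (\<lambda>h. ((c * s) *\<^sub>R chain_grad (idx 1) a b S (s *\<^sub>R z)) \<bullet> h)) (at z)" for z
      unfolding fi by (rule has_derivative_rescale) (rule has_derivative_chain_fun)
    have "(c * s * (75 * pi * \<bar>s\<bar>))-lipschitz_on UNIV (\<lambda>z. (c * s) *\<^sub>R chain_grad (idx 1) a b S (s *\<^sub>R z))"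
      by (rule lipschitz_on_rescale[OF lipschitz_chain_grad[OF S], where c = "c * s" and s = s])
        (use K(1,2) in auto)
    then show "Lf-lipschitz_on UNIV (\<lambda>z. (c * s) *\<^sub>R chain_grad (idx 1) a b S (s *\<^sub>R z))"
      using K by simp
  qed
qed

lemma lipschitz_fi:
  fixes eps Lf :: real and m i :: nat
  assumes "0 < eps" "0 < Lf" "0 < m" "odd CARD('n::{finite,linorder})"
  shows "(50 * pi * eps * sqrt (real CARD('n::{finite,linorder})) / sqrt (real m))-lipschitz_on UNIV
           (fi eps Lf m i :: real^'n::{finite,linorder} \<Rightarrow> real)"
proof -
  obtain a b :: "nat \<Rightarrow> 'n" and S where S: "disjoint_pairs a b S" and h: "hfun m i = chain_fun (idx 1) a b S"
    using hfun_eq_chain_fun[OF assms(4)] by metis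
  define c where "c = 300 * pi * eps^2 / (real m * Lf)"
  define s where "s = sqrt (real m) * Lf / (150 * pi * eps)"
  note K = fi_scale_constants[OF assms(1-3), folded c_def s_def]
  have fi: "fi eps Lf m i = (\<lambda>z. c *\<^sub>R chain_fun (idx 1) a b S (s *\<^sub>R z))"
    by (simp add: fun_eq_iff fi_def c_def s_def h)
  have "(c * ((4 + 12 * pi) * sqrt (real CARD('n)) * \<bar>s\<bar>))-lipschitz_on UNIV
      (\<lambda>z. c *\<^sub>R chain_fun (idx 1) a b S (s *\<^sub>R z))"
    by (rule lipschitz_on_rescale[OF lipschitz_chain_fun[OF S], where c = c and s = s])
      (use K(1,2) in auto)
  moreover have "c * ((4 + 12 * pi) * sqrt (real CARD('n)) * \<bar>s\<bar>)
      = (4 + 12 * pi) * sqrt (real CARD('n)) * (c * s)"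
    using K(2) by (simp add: mult_ac)
  moreover have "\<dots> = (4 + 12 * pi) * (2 * eps * sqrt (real CARD('n)) / sqrt (real m))"
    by (simp add: K(3))
  moreover have "(4 + 12 * pi) * (2 * eps * sqrt (real CARD('n)) / sqrt (real m))
      \<le> 25 * pi * (2 * eps * sqrt (real CARD('n)) / sqrt (real m))"
    using assms(1) pi_gt3 by (intro mult_right_mono) auto
  ultimately show ?thesis
    unfolding fi by (auto elim!: lipschitz_on_mono)
qed

lemma fi_gap:
  fixes eps Lf :: real and m i :: nat
  assumes "0 < eps" "0 < Lf" "0 < m" "odd CARD('n::{finite,linorder})"
  shows "fi eps Lf m i (0 :: real^'n::{finite,linorder}) - fi eps Lf m i (z :: real^'n::{finite,linorder})
           \<le> 3000 * pi^2 * real CARD('n::{finite,linorder}) * eps^2 / (real m * Lf)"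
proof -
  obtain a b :: "nat \<Rightarrow> 'n" and S where "card S \<le> CARD('n) div 2" and h: "hfun m i = chain_fun (idx 1) a b S"
    using hfun_eq_chain_fun[OF assms(4)] by metis
  define c where "c = 300 * pi * eps^2 / (real m * Lf)"
  define s where "s = sqrt (real m) * Lf / (150 * pi * eps)"
  have "0 < c" using fi_scale_constants[OF assms(1-3)] by (simp add: c_def)
  have "2 * pi + 12 * pi * real (card S) \<le> 10 * pi * real CARD('n)"
  proof -
    have "2 * real (card S) \<le> real CARD('n)"
      using \<open>card S \<le> CARD('n) div 2\<close> by linarith
    moreover have "1 \<le> real CARD('n)"
      by simp
    ultimately have "2 + 12 * real (card S) \<le> 10 * real CARD('n)"
      by linarith
    from mult_left_mono[OF this pi_ge_zero] show ?thesis
      by (simp add: algebra_simps)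
  qed
  have "fi eps Lf m i (0 :: real^'n::{finite,linorder}) - fi eps Lf m i z = c * (chain_fun (idx 1) a b S 0 - chain_fun (idx 1) a b S (s *\<^sub>R z))"
    by (simp add: fi_def c_def s_def h right_diff_distrib)
  also have "\<dots> \<le> c * (10 * pi * real CARD('n))"
    using chain_fun_gap[of "idx 1" a b S "s *\<^sub>R z"] \<open>0 < c\<close> \<open>2 * pi + 12 * pi * _ \<le> _\<close>
    by (intro mult_left_mono) auto
  also have "\<dots> = 3000 * pi^2 * real CARD('n) * eps^2 / (real m * Lf)"
    by (simp add: c_def power2_eq_square)
  finally show ?thesis .
qed

lemma has_derivative_blockwise_sum:
  fixes f :: "'m::finite \<Rightarrow> 'a::real_inner \<Rightarrow> real"
  assumes "\<And>k z. (f k has_derivative (\<lambda>h. G k z \<bullet> h)) (at z)"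
  shows "((\<lambda>x. \<Sum>k\<in>UNIV. f k (x $ k)) has_derivative (\<lambda>h. (\<chi> k. G k (x $ k)) \<bullet> h)) (at x)"
proof -
  have "((\<lambda>x. \<Sum>k\<in>UNIV. f k (x $ k)) has_derivative (\<lambda>h. \<Sum>k\<in>UNIV. G k (x $ k) \<bullet> h $ k)) (at x)"
    by (intro has_derivative_sum has_derivative_compose[OF has_derivative_vec_nth[OF has_derivative_ident] assms])
  then show ?thesis
    by (rule has_derivative_eq_rhs) (simp add: fun_eq_iff inner_vec_def)
qed

lemma lipschitz_on_blockwise:
  fixes G :: "'m::finite \<Rightarrow> 'a::real_normed_vector \<Rightarrow> 'b::real_normed_vector"
  assumes "\<And>k. L-lipschitz_on UNIV (G k)"
  shows "L-lipschitz_on UNIV (\<lambda>x. \<chi> k. G k (x $ k))"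
proof (rule lipschitz_onI)
  show L: "0 \<le> L"
    using lipschitz_on_nonneg assms by blast
  fix x y :: "'a^'m"
  have "dist (\<chi> k. G k (x $ k)) (\<chi> k. G k (y $ k)) = L2_set (\<lambda>k. dist (G k (x $ k)) (G k (y $ k))) UNIV"
    by (simp add: dist_vec_def)
  also have "\<dots> \<le> L2_set (\<lambda>k. L * dist (x $ k) (y $ k)) UNIV"
    by (rule L2_set_mono) (auto intro: lipschitz_onD[OF assms])
  also have "\<dots> = L * dist x y"
    by (simp add: dist_vec_def L2_set_right_distrib L)
  finally show "dist (\<chi> k. G k (x $ k)) (\<chi> k. G k (y $ k)) \<le> L * dist x y" .
qed

lemma lipschitz_on_blockwise_sum:
  fixes f :: "'m::finite \<Rightarrow> 'a::real_normed_vector \<Rightarrow> real"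
  assumes "\<And>k. M-lipschitz_on UNIV (f k)"
  shows "(real CARD('m) * M)-lipschitz_on UNIV (\<lambda>x. \<Sum>k\<in>UNIV. f k (x $ k))"
proof (rule lipschitz_onI)
  have M: "0 \<le> M"
    using lipschitz_on_nonneg assms by blast
  then show "0 \<le> real CARD('m) * M"
    by simp
  fix x y :: "'a^'m"
  have "\<bar>(\<Sum>k\<in>UNIV. f k (x $ k)) - (\<Sum>k\<in>UNIV. f k (y $ k))\<bar> \<le> (\<Sum>k\<in>UNIV. \<bar>f k (x $ k) - f k (y $ k)\<bar>)"
    unfolding sum_subtractf[symmetric] by (rule sum_abs)
  also have "\<dots> \<le> (\<Sum>k\<in>(UNIV :: 'm set). M * dist x y)"
  proof (rule sum_mono)
    fix k
    have "\<bar>f k (x $ k) - f k (y $ k)\<bar> \<le> M * dist (x $ k) (y $ k)"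
      using lipschitz_onD[OF assms] by (simp add: dist_real_def)
    also have "\<dots> \<le> M * dist x y"
      using dist_vec_nth_le M by (intro mult_left_mono)
    finally show "\<bar>f k (x $ k) - f k (y $ k)\<bar> \<le> M * dist x y" .
  qed
  finally show "dist (\<Sum>k\<in>UNIV. f k (x $ k)) (\<Sum>k\<in>UNIV. f k (y $ k)) \<le> real CARD('m) * M * dist x y"
    by (simp add: dist_real_def)
qed

lemma fi_sub_INF_le:
  fixes eps Lf :: real and m i :: nat
  assumes "0 < eps" "0 < Lf" "0 < m" "odd CARD('n::{finite,linorder})"
  shows "fi eps Lf m i (0 :: real^'n::{finite,linorder}) - (INF z. fi eps Lf m i (z :: real^'n::{finite,linorder}))
           \<le> 3000 * pi^2 * real CARD('n::{finite,linorder}) * eps^2 / (real m * Lf)"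
  by (rule diff_INF_le) (rule fi_gap[OF assms])

lemma f0_eq_blockwise_sum:
  "f0 eps Lf = (\<lambda>x :: real^'n::{finite,linorder}^'m::{finite,linorder}. \<Sum>k\<in>UNIV. fi eps Lf CARD('m) (pos k) (x $ k))"
  by (simp add: fun_eq_iff f0_def)

lemma f0_sub_INF_le:
  assumes "0 < eps" "0 < Lf" "odd CARD('n::{finite,linorder})"
  shows "f0 eps Lf (0 :: real^'n::{finite,linorder}^'m::{finite,linorder}) - (INF x. f0 eps Lf (x :: real^'n::{finite,linorder}^'m::{finite,linorder}))
           \<le> 3000 * pi^2 * real CARD('n::{finite,linorder}) * eps^2 / Lf"
proof (rule diff_INF_le)
  have hyps: "0 < eps" "0 < Lf" "0 < CARD('m)" "odd CARD('n)"
    using assms by simp_all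
  fix x :: "real^'n::{finite,linorder}^'m::{finite,linorder}"
  have "f0 eps Lf (0 :: real^'n::{finite,linorder}^'m::{finite,linorder}) - f0 eps Lf x
      = (\<Sum>k\<in>UNIV. fi eps Lf CARD('m) (pos k) (0 :: real^'n::{finite,linorder}) - fi eps Lf CARD('m) (pos k) (x $ k))"
    by (simp add: f0_def sum_subtractf)
  also have "\<dots> \<le> (\<Sum>k\<in>(UNIV :: 'm set). 3000 * pi^2 * real CARD('n) * eps^2 / (real CARD('m) * Lf))"
    by (rule sum_mono) (rule fi_gap[OF hyps])
  finally show "f0 eps Lf (0 :: real^'n::{finite,linorder}^'m::{finite,linorder}) - f0 eps Lf x \<le> 3000 * pi^2 * real CARD('n) * eps^2 / Lf"
    by simp
qed

lemma f0_gradient: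
  assumes "0 < eps" "0 < Lf" "odd CARD('n::{finite,linorder})"
  shows "\<exists>G :: real^'n::{finite,linorder}^'m::{finite,linorder} \<Rightarrow> real^'n::{finite,linorder}^'m::{finite,linorder}. (\<forall>x. (f0 eps Lf has_derivative (\<lambda>h. G x \<bullet> h)) (at x)) \<and> Lf-lipschitz_on UNIV G"
proof -
  have hyps: "0 < eps" "0 < Lf" "0 < CARD('m)" "odd CARD('n)"
    using assms by simp_all
  obtain G :: "nat \<Rightarrow> real^'n::{finite,linorder} \<Rightarrow> real^'n::{finite,linorder}"
    where G: "\<And>i z. (fi eps Lf CARD('m) i has_derivative (\<lambda>h. G i z \<bullet> h)) (at z)"
      "\<And>i. Lf-lipschitz_on UNIV (G i)"
    using fi_gradient[OF hyps] by metis
  show ?thesis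
  proof (intro exI conjI allI)
    show "(f0 eps Lf has_derivative (\<lambda>h. (\<chi> k. G (pos k) (x $ k)) \<bullet> h)) (at x)" for x :: "real^'n::{finite,linorder}^'m::{finite,linorder}"
      unfolding f0_eq_blockwise_sum by (rule has_derivative_blockwise_sum) (rule G(1))
    show "Lf-lipschitz_on UNIV (\<lambda>x :: real^'n::{finite,linorder}^'m::{finite,linorder}. \<chi> k. G (pos k) (x $ k))"
      by (rule lipschitz_on_blockwise) (rule G(2))
  qed
qed

lemma lipschitz_f0:
  assumes "0 < eps" "0 < Lf" "odd CARD('n::{finite,linorder})"
  shows "(50 * pi * eps * sqrt (real CARD('m::{finite,linorder}) * real CARD('n)))-lipschitz_on UNIV
           (f0 eps Lf :: real^'n::{finite,linorder}^'m::{finite,linorder} \<Rightarrow> real)"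
proof -
  let ?m = "real CARD('m)" and ?n = "real CARD('n)"
  have hyps: "0 < eps" "0 < Lf" "0 < CARD('m)" "odd CARD('n)"
    using assms by simp_all
  have "(?m * (50 * pi * eps * sqrt ?n / sqrt ?m))-lipschitz_on UNIV (f0 eps Lf :: real^'n::{finite,linorder}^'m::{finite,linorder} \<Rightarrow> real)"
    unfolding f0_eq_blockwise_sum by (rule lipschitz_on_blockwise_sum) (rule lipschitz_fi[OF hyps])
  moreover have "?m * (50 * pi * eps * sqrt ?n / sqrt ?m) = ?m / sqrt ?m * (50 * pi * eps * sqrt ?n)"
    by simp
  moreover have "\<dots> = 50 * pi * eps * sqrt (?m * ?n)"
    by (simp add: real_div_sqrt real_sqrt_mult)
  ultimately show ?thesis
    by simp
qed

theorem lemma2: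
  fixes eps Lf :: real and m1 m2 :: nat
  assumes "0 < eps" "eps < 1" "0 < Lf"
    and "m1 \<ge> 2" "m2 \<ge> 1" "even (m1 * m2)"
    and "CARD('m) = 3 * m1 * m2"
    and "odd CARD('n)" "CARD('n) \<ge> 5"
  shows
    "(\<forall>i\<in>{1..CARD('m)}.
        fi eps Lf CARD('m) i (0::real^('n::{finite,linorder})) - (INF z. fi eps Lf CARD('m) i (z::real^('n::{finite,linorder})))
          \<le> 3000 * pi^2 * real CARD('n) * eps^2 / (real CARD('m) * Lf))
     \<and> f0 eps Lf (0::real^('n::{finite,linorder})^('m::{finite,linorder})) - (INF x. f0 eps Lf (x::real^('n::{finite,linorder})^('m::{finite,linorder})))
          \<le> 3000 * pi^2 * real CARD('n) * eps^2 / Lf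
     \<and> (\<forall>i\<in>{1..CARD('m)}. \<exists>G :: real^('n::{finite,linorder}) \<Rightarrow> real^('n::{finite,linorder}).
          (\<forall>z. (fi eps Lf CARD('m) i has_derivative (\<lambda>h. G z \<bullet> h)) (at z))
          \<and> Lf-lipschitz_on UNIV G)
     \<and> (\<exists>G :: real^('n::{finite,linorder})^('m::{finite,linorder}) \<Rightarrow> real^('n::{finite,linorder})^('m::{finite,linorder}).
          (\<forall>x. (f0 eps Lf has_derivative (\<lambda>h. G x \<bullet> h)) (at x))
          \<and> Lf-lipschitz_on UNIV G)
     \<and> (\<forall>i\<in>{1..CARD('m)}.
          (50 * pi * eps * sqrt (real CARD('n)) / sqrt (real CARD('m)))-lipschitz_on UNIV
             (fi eps Lf CARD('m) i :: real^('n::{finite,linorder}) \<Rightarrow> real))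
     \<and> (50 * pi * eps * sqrt (real CARD('m) * real CARD('n)))-lipschitz_on UNIV
             (f0 eps Lf :: real^('n::{finite,linorder})^('m::{finite,linorder}) \<Rightarrow> real)"
proof -
  have hyps: "0 < eps" "0 < Lf" "0 < CARD('m)" "odd CARD('n)"
    using assms by simp_all
  show ?thesis
    using fi_sub_INF_le[OF hyps] f0_sub_INF_le[OF hyps(1,2,4)] fi_gradient[OF hyps] f0_gradient[OF hyps(1,2,4)]
      lipschitz_fi[OF hyps] lipschitz_f0[OF hyps(1,2,4)]
    by blast
qed

end
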